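(* Let $d = 10$. (i) If $n = 4(12m+5) + 4(6k+3)\sqrt{10}$ with $m, k \in \mathbb{Z}$ and $m \equiv 2$ or $3 \pmod 5$, then there exist infinitely many $D(n)$-quadruples in $\mathbb{Z}[\sqrt{10}]$. (ii) If $n = 4(12m+11) + 4(6k+3)\sqrt{10}$ with $m, k \in \mathbb{Z}$ and $m \equiv 0$ or $4 \pmod 5$, then there exist infinitely many $D(n)$-quadruples in $\mathbb{Z}[\sqrt{10}]$.
   Context: For $n \in \mathbb{Z}[\sqrt{d}]$, a set $\{a_1,a_2,a_3,a_4\}$ of four distinct non-zero elements of $\mathbb{Z}[\sqrt{d}]$ is called a $D(n)$-quadruple in $\mathbb{Z}[\sqrt{d}]$ if $a_ia_j + n$ is a square of an element of $\mathbb{Z}[\sqrt{d}]$ for all $1 \le i < j \le 4$. *)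

theory Defs
  imports Main
begin

text \<open>Elements of Z[sqrt d] are represented as pairs (a, b) :: int \<times> int,
standing for a + b * sqrt d.\<close>

definition zsd_mult :: "int \<Rightarrow> int \<times> int \<Rightarrow> int \<times> int \<Rightarrow> int \<times> int" where
  "zsd_mult d x y = (fst x * fst y + d * snd x * snd y, fst x * snd y + snd x * fst y)"

definition zsd_add :: "int \<times> int \<Rightarrow> int \<times> int \<Rightarrow> int \<times> int" where
  "zsd_add x y = (fst x + fst y, snd x + snd y)"

definition zsd_is_square :: "int \<Rightarrow> int \<times> int \<Rightarrow> bool" where
  "zsd_is_square d x \<longleftrightarrow> (\<exists>r. zsd_mult d r r = x)"

definition is_Dn_quadruple :: "int \<Rightarrow> int \<times> int \<Rightarrow> (int \<times> int) set \<Rightarrow> bool" where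
  "is_Dn_quadruple d n Q \<longleftrightarrow> card Q = 4 \<and> (0, 0) \<notin> Q \<and>
     (\<forall>a\<in>Q. \<forall>b\<in>Q. a \<noteq> b \<longrightarrow> zsd_is_square d (zsd_add (zsd_mult d a b) n))"

end

theory Submission
  imports Defs Complex_Main "HOL-Library.Numeral_Type"
begin

text \<open>For any m, k in a commutative ring the set {m, B, C, D} defined below is a D(n)-quadruple
for n = 4 + 4m(2k + 1), with explicit square roots for all six products. In Z[\<surd>10] choose
2k + 1 = \<epsilon> a unit of norm 1 and m = c \<epsilon>\<inverse>: then n = 4 + 4c does not depend on \<epsilon>, and
c = (a - 1) + b\<surd>10 gives n = 4a + 4b\<surd>10. The powers of 19 + 6\<surd>10 supply infinitely many such
units, and D = \<epsilon>(9c + 8) separates the resulting quadruples. Nonvanishing and distinctness of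
the four entries follow by reduction modulo 3 (where \<surd>10 \<equiv> 1), except for m \<noteq> B, which is
a factorisation, and C \<noteq> D, which reduces to the norm equation N(9c + 8) = N(c); the latter
forces 5 to divide a.\<close>

definition Dn_quadruple :: "'a::comm_ring_1 \<Rightarrow> 'a set \<Rightarrow> bool" where
  "Dn_quadruple n Q \<longleftrightarrow> card Q = 4 \<and> 0 \<notin> Q \<and>
     (\<forall>a\<in>Q. \<forall>b\<in>Q. a \<noteq> b \<longrightarrow> (\<exists>r. a * b + n = r\<^sup>2))"

definition quad_b :: "'a::comm_ring_1 \<Rightarrow> 'a \<Rightarrow> 'a" where
  "quad_b m k = m * (3 * k + 1)\<^sup>2 + 4 * k"

definition quad_c :: "'a::comm_ring_1 \<Rightarrow> 'a \<Rightarrow> 'a" where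
  "quad_c m k = m * (3 * k + 2)\<^sup>2 + 4 * (k + 1)"

definition quad_d :: "'a::comm_ring_1 \<Rightarrow> 'a \<Rightarrow> 'a" where
  "quad_d m k = 9 * m * (2 * k + 1)\<^sup>2 + 8 * (2 * k + 1)"

lemma quad_products_plus_n:
  fixes m k :: "'a::comm_ring_1"
  defines "n \<equiv> 4 + 4 * m * (2 * k + 1)"
  shows "m * quad_b m k + n = (m * (3 * k + 1) + 2)\<^sup>2"
    and "m * quad_c m k + n = (m * (3 * k + 2) + 2)\<^sup>2"
    and "m * quad_d m k + n = (3 * m * (2 * k + 1) + 2)\<^sup>2"
    and "quad_b m k * quad_c m k + n = (m * (3 * k + 1) * (3 * k + 2) + 4 * k + 2)\<^sup>2"
    and "quad_b m k * quad_d m k + n = (3 * m * (3 * k + 1) * (2 * k + 1) + 8 * k + 2)\<^sup>2"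
    and "quad_c m k * quad_d m k + n = (3 * m * (3 * k + 2) * (2 * k + 1) + 8 * k + 6)\<^sup>2"
  unfolding n_def quad_b_def quad_c_def quad_d_def by (simp_all add: power2_eq_square algebra_simps)

lemma Dn_quadruple_quad:
  fixes m k :: "'a::comm_ring_1"
  assumes "distinct [m, quad_b m k, quad_c m k, quad_d m k]"
    and "0 \<notin> {m, quad_b m k, quad_c m k, quad_d m k}"
  shows "Dn_quadruple (4 + 4 * m * (2 * k + 1)) {m, quad_b m k, quad_c m k, quad_d m k}"
proof -
  have "card {m, quad_b m k, quad_c m k, quad_d m k} = 4"
    using assms(1) by simp
  moreover have "\<exists>r. a * b + (4 + 4 * m * (2 * k + 1)) = r\<^sup>2"
    if "a \<in> {m, quad_b m k, quad_c m k, quad_d m k}" "b \<in> {m, quad_b m k, quad_c m k, quad_d m k}" "a \<noteq> b" for a b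
    using that quad_products_plus_n[of m k] by (auto simp: mult.commute)
  ultimately show ?thesis
    using assms(2) unfolding Dn_quadruple_def by blast
qed

lemma quad_b_minus: "quad_b m k - m = k * (3 * m * (3 * k + 2) + 4)"
  for m k :: "'a::comm_ring_1"
  by (simp add: quad_b_def power2_eq_square algebra_simps)

lemma quad_d_minus_quad_c: "quad_d m k - quad_c m k = (3 * k + 1) * (m * (9 * k + 5) + 4)"
  for m k :: "'a::comm_ring_1"
  by (simp add: quad_c_def quad_d_def power2_eq_square algebra_simps)

typedef zsqrt10 = "UNIV :: (int \<times> int) set"
  morphisms coords Abs_zsqrt10 by simp

setup_lifting type_definition_zsqrt10

instantiation zsqrt10 :: comm_ring_1
begin

lift_definition zero_zsqrt10 :: zsqrt10 is "(0, 0)" .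
lift_definition one_zsqrt10 :: zsqrt10 is "(1, 0)" .
lift_definition plus_zsqrt10 :: "zsqrt10 \<Rightarrow> zsqrt10 \<Rightarrow> zsqrt10" is zsd_add .
lift_definition uminus_zsqrt10 :: "zsqrt10 \<Rightarrow> zsqrt10" is "\<lambda>x. (- fst x, - snd x)" .
lift_definition minus_zsqrt10 :: "zsqrt10 \<Rightarrow> zsqrt10 \<Rightarrow> zsqrt10"
  is "\<lambda>x y. (fst x - fst y, snd x - snd y)" .
lift_definition times_zsqrt10 :: "zsqrt10 \<Rightarrow> zsqrt10 \<Rightarrow> zsqrt10" is "zsd_mult 10" .

instance
  by standard (transfer; simp add: zsd_add_def zsd_mult_def algebra_simps)+

end

lift_definition sqrt10 :: zsqrt10 is "(0, 1)" .

lemma coords_of_int: "coords (of_int z) = (z, 0)"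
  by (induction z rule: int_induct[where k = 0])
    (simp_all add: zero_zsqrt10.rep_eq one_zsqrt10.rep_eq plus_zsqrt10.rep_eq minus_zsqrt10.rep_eq zsd_add_def)

lemma coords_numeral [simp]: "coords (numeral n) = (numeral n, 0)"
  using coords_of_int[of "numeral n"] by simp

lemma coords_canonical [simp]: "coords (of_int a + of_int b * sqrt10) = (a, b)"
  by (simp add: plus_zsqrt10.rep_eq times_zsqrt10.rep_eq sqrt10.rep_eq coords_of_int zsd_add_def zsd_mult_def)

lemma zsqrt10_canonical: "x = of_int (fst (coords x)) + of_int (snd (coords x)) * sqrt10"
  by (metis coords_canonical coords_inject prod.collapse)

lemma sqrt10_squared [simp]: "sqrt10\<^sup>2 = 10"
proof -
  have "coords (sqrt10\<^sup>2) = coords 10"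
    by (simp add: power2_eq_square times_zsqrt10.rep_eq sqrt10.rep_eq zsd_mult_def)
  then show ?thesis
    using coords_inject by blast
qed

definition zsqrt10_norm :: "zsqrt10 \<Rightarrow> int" where
  "zsqrt10_norm x = (fst (coords x))\<^sup>2 - 10 * (snd (coords x))\<^sup>2"

lemma zsqrt10_norm_canonical [simp]:
  "zsqrt10_norm (of_int a + of_int b * sqrt10) = a\<^sup>2 - 10 * b\<^sup>2"
  by (simp add: zsqrt10_norm_def)

lemma zsqrt10_norm_mult: "zsqrt10_norm (x * y) = zsqrt10_norm x * zsqrt10_norm y"
  unfolding zsqrt10_norm_def by transfer (simp add: zsd_mult_def power2_eq_square algebra_simps)

lemma zsqrt10_norm_uminus [simp]: "zsqrt10_norm (- x) = zsqrt10_norm x"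
  unfolding zsqrt10_norm_def by transfer simp

lemma zsqrt10_norm_power: "zsqrt10_norm (x ^ n) = zsqrt10_norm x ^ n"
  by (induction n) (simp_all add: zsqrt10_norm_mult zsqrt10_norm_def[of 1] one_zsqrt10.rep_eq)

lemma square_eq_ten_times_square:
  fixes a b :: int
  assumes "a\<^sup>2 = 10 * b\<^sup>2"
  shows "b = 0"
  using assms
proof (induction "nat \<bar>b\<bar>" arbitrary: a b rule: less_induct)
  case (less b a)
  show ?case
  proof (rule ccontr)
    assume "b \<noteq> 0"
    have "even a"
      using less.prems by (metis even_mult_iff even_numeral even_power)
    then obtain c where c: "a = 2 * c" ..
    then have "5 * b\<^sup>2 = 2 * c\<^sup>2"
      using less.prems by (simp add: power_mult_distrib)
    then have "even b"
      by (metis even_mult_iff even_numeral odd_numeral even_power)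
    then obtain e where e: "b = 2 * e" ..
    then have "c\<^sup>2 = 10 * e\<^sup>2"
      using \<open>5 * b\<^sup>2 = 2 * c\<^sup>2\<close> by (simp add: power_mult_distrib)
    moreover have "nat \<bar>e\<bar> < nat \<bar>b\<bar>"
      using e \<open>b \<noteq> 0\<close> by linarith
    ultimately have "e = 0"
      using less.hyps by blast
    with e \<open>b \<noteq> 0\<close> show False by simp
  qed
qed

lemma zsqrt10_norm_eq_0_iff [simp]: "zsqrt10_norm x = 0 \<longleftrightarrow> x = 0"
proof
  assume "zsqrt10_norm x = 0"
  then have sq: "(fst (coords x))\<^sup>2 = 10 * (snd (coords x))\<^sup>2"
    by (simp add: zsqrt10_norm_def)
  then have "snd (coords x) = 0"
    by (rule square_eq_ten_times_square)
  moreover from sq this have "fst (coords x) = 0"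
    by simp
  ultimately show "x = 0"
    using zsqrt10_canonical[of x] by simp
qed (simp add: zsqrt10_norm_def zero_zsqrt10.rep_eq)

instance zsqrt10 :: idom
proof
  fix x y :: zsqrt10
  assume "x \<noteq> 0" "y \<noteq> 0"
  then show "x * y \<noteq> 0"
    by (simp flip: zsqrt10_norm_eq_0_iff add: zsqrt10_norm_mult)
qed

definition zsqrt10_eval :: "'a::comm_ring_1 \<Rightarrow> zsqrt10 \<Rightarrow> 'a" where
  "zsqrt10_eval w x = of_int (fst (coords x)) + of_int (snd (coords x)) * w"

lemma zsqrt10_eval_of_int [simp]: "zsqrt10_eval w (of_int z) = of_int z"
  by (simp add: zsqrt10_eval_def coords_of_int)

lemma zsqrt10_eval_numeral [simp]: "zsqrt10_eval w (numeral n) = numeral n"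
  by (simp add: zsqrt10_eval_def)

lemma zsqrt10_eval_zero [simp]: "zsqrt10_eval w 0 = 0"
  by (simp add: zsqrt10_eval_def zero_zsqrt10.rep_eq)

lemma zsqrt10_eval_one [simp]: "zsqrt10_eval w 1 = 1"
  by (simp add: zsqrt10_eval_def one_zsqrt10.rep_eq)

lemma zsqrt10_eval_sqrt10 [simp]: "zsqrt10_eval w sqrt10 = w"
  by (simp add: zsqrt10_eval_def sqrt10.rep_eq)

lemma zsqrt10_eval_add [simp]: "zsqrt10_eval w (x + y) = zsqrt10_eval w x + zsqrt10_eval w y"
  by (simp add: zsqrt10_eval_def plus_zsqrt10.rep_eq zsd_add_def algebra_simps)

lemma zsqrt10_eval_diff [simp]: "zsqrt10_eval w (x - y) = zsqrt10_eval w x - zsqrt10_eval w y"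
  by (simp add: zsqrt10_eval_def minus_zsqrt10.rep_eq algebra_simps)

locale sqrt10_root =
  fixes w :: "'a::comm_ring_1"
  assumes root_squared: "w\<^sup>2 = 10"
begin

lemma zsqrt10_eval_mult [simp]: "zsqrt10_eval w (x * y) = zsqrt10_eval w x * zsqrt10_eval w y"
proof -
  obtain a b c d where xy: "coords x = (a, b)" "coords y = (c, d)"
    by fastforce
  have "(of_int a + of_int b * w) * (of_int c + of_int d * w) =
      of_int a * of_int c + of_int b * of_int d * w\<^sup>2 + (of_int a * of_int d + of_int b * of_int c) * w"
    by (simp add: algebra_simps power2_eq_square)
  then show ?thesis
    by (simp add: zsqrt10_eval_def times_zsqrt10.rep_eq zsd_mult_def xy root_squared algebra_simps)
qed

lemma zsqrt10_eval_power [simp]: "zsqrt10_eval w (x ^ n) = zsqrt10_eval w x ^ n"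
  by (induction n) simp_all

end

text \<open>Since 10 = 1 in \<int>/3\<int>, evaluation at 1 is reduction modulo 3.\<close>

interpretation mod3: sqrt10_root "1 :: 3"
  by standard simp

interpretation real: sqrt10_root "sqrt 10 :: real"
  by standard simp

abbreviation mod3 :: "zsqrt10 \<Rightarrow> 3" where
  "mod3 \<equiv> zsqrt10_eval 1"

lemma Dn_quadruple_unit_twist:
  fixes c \<epsilon> \<epsilon>' k :: zsqrt10
  assumes unit: "\<epsilon> * \<epsilon>' = 1" and odd: "\<epsilon> = 2 * k + 1" and "k \<noteq> 0" and "mod3 k = 0"
    and "mod3 c = 1" and "zsqrt10_norm \<epsilon> = 1" and norms: "zsqrt10_norm (9 * c + 8) \<noteq> zsqrt10_norm c"
  defines "m \<equiv> c * \<epsilon>'"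
  shows "Dn_quadruple (4 + 4 * c) {m, quad_b m k, quad_c m k, quad_d m k}"
proof -
  have m_unit: "m * \<epsilon> = c"
    using unit by (simp add: m_def mult.assoc mult.commute)
  have "mod3 \<epsilon> * mod3 \<epsilon>' = 1"
    using unit by (metis mod3.zsqrt10_eval_mult zsqrt10_eval_one)
  moreover have "mod3 \<epsilon> = 1"
    using odd \<open>mod3 k = 0\<close> by simp
  ultimately have "mod3 m = 1"
    using \<open>mod3 c = 1\<close> by (simp add: m_def)
  then have mod3_quad: "mod3 (quad_b m k) = 1" "mod3 (quad_c m k) = 2" "mod3 (quad_d m k) = 2"
    using \<open>mod3 k = 0\<close> by (simp_all add: quad_b_def quad_c_def quad_d_def)
  have "m \<noteq> quad_b m k"
  proof -
    have "mod3 (3 * m * (3 * k + 2) + 4) = 1"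
      using \<open>mod3 k = 0\<close> \<open>mod3 m = 1\<close> by simp
    then have "3 * m * (3 * k + 2) + 4 \<noteq> 0"
      by (metis zero_neq_one zsqrt10_eval_zero)
    then have "k * (3 * m * (3 * k + 2) + 4) \<noteq> 0"
      using \<open>k \<noteq> 0\<close> by simp
    then show ?thesis
      by (metis quad_b_minus right_minus_eq)
  qed
  moreover have "quad_c m k \<noteq> quad_d m k"
  proof -
    have "m * (9 * k + 5) + 4 \<noteq> 0"
    proof
      assume "m * (9 * k + 5) + 4 = 0"
      \<comment> \<open>multiplied by 2\<epsilon>, this says \<epsilon> (9c + 8) = -c, which is ruled out by taking norms\<close>
      moreover have "2 * \<epsilon> * (m * (9 * k + 5) + 4) = \<epsilon> * (9 * c + 8) + c"
        unfolding m_unit[symmetric] odd by (simp add: power2_eq_square algebra_simps)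
      ultimately have "\<epsilon> * (9 * c + 8) = - c"
        by (simp add: eq_neg_iff_add_eq_0)
      then have "zsqrt10_norm \<epsilon> * zsqrt10_norm (9 * c + 8) = zsqrt10_norm c"
        by (metis zsqrt10_norm_mult zsqrt10_norm_uminus)
      then have "zsqrt10_norm (9 * c + 8) = zsqrt10_norm c"
        using \<open>zsqrt10_norm \<epsilon> = 1\<close> by simp
      with norms show False ..
    qed
    moreover have "mod3 (3 * k + 1) = 1"
      using \<open>mod3 k = 0\<close> by simp
    then have "3 * k + 1 \<noteq> 0"
      by (metis zero_neq_one zsqrt10_eval_zero)
    ultimately have "(3 * k + 1) * (m * (9 * k + 5) + 4) \<noteq> 0"
      by simp
    then show ?thesis
      by (metis quad_d_minus_quad_c right_minus_eq)
  qed
  moreover have mod3_neq: "x \<noteq> y" if "mod3 x \<noteq> mod3 y" for x y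
    using that by auto
  ultimately have "distinct [m, quad_b m k, quad_c m k, quad_d m k]"
    using mod3_neq[of m "quad_c m k"] mod3_neq[of m "quad_d m k"]
      mod3_neq[of "quad_b m k" "quad_c m k"] mod3_neq[of "quad_b m k" "quad_d m k"]
    by (simp add: \<open>mod3 m = 1\<close> mod3_quad)
  moreover have "0 \<notin> {m, quad_b m k, quad_c m k, quad_d m k}"
    using mod3_neq[of 0 m] mod3_neq[of 0 "quad_b m k"] mod3_neq[of 0 "quad_c m k"] mod3_neq[of 0 "quad_d m k"]
    by (auto simp: \<open>mod3 m = 1\<close> mod3_quad)
  ultimately show ?thesis
    using Dn_quadruple_quad[of m k] by (simp add: odd[symmetric] m_unit mult.assoc)
qed

lemma infinite_range_if_inj_members:
  fixes f :: "'i \<Rightarrow> 'a" and A :: "'i \<Rightarrow> 'a set"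
  assumes "infinite (UNIV :: 'i set)" "inj f" "\<And>j. f j \<in> A j" "\<And>j. finite (A j)"
  shows "infinite (range A)"
proof
  assume "finite (range A)"
  then have "finite (\<Union>(range A))"
    using assms(4) by blast
  moreover have "range f \<subseteq> \<Union>(range A)"
    using assms(3) by blast
  ultimately have "finite (range f)"
    by (rule finite_subset[rotated])
  then show False
    using assms(1,2) finite_imageD by blast
qed

lemma pell_unit_power_eq_iff: "(19 + 6 * sqrt10) ^ i = (19 + 6 * sqrt10) ^ j \<longleftrightarrow> i = j"
proof
  assume "(19 + 6 * sqrt10) ^ i = (19 + 6 * sqrt10) ^ j"
  then have "(19 + 6 * sqrt 10 :: real) ^ i = (19 + 6 * sqrt 10) ^ j"
    by (metis real.zsqrt10_eval_power zsqrt10_eval_add zsqrt10_eval_numeral real.zsqrt10_eval_mult zsqrt10_eval_sqrt10)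
  moreover have "(1 :: real) < 19 + 6 * sqrt 10"
    using real_sqrt_ge_zero[of 10] by linarith
  ultimately show "i = j"
    by simp
qed simp

lemma infinite_Dn_quadruples_zsqrt10:
  fixes c :: zsqrt10
  assumes "mod3 c = 1" and "zsqrt10_norm (9 * c + 8) \<noteq> zsqrt10_norm c"
  shows "infinite {Q. Dn_quadruple (4 + 4 * c) Q}"
proof -
  \<comment> \<open>u = 1 + 2\<kappa> with \<kappa> = 0 mod 3, so each power u^(j+1) is 2k + 1 with k = 0 mod 3\<close>
  define u :: zsqrt10 where "u = 19 + 6 * sqrt10"
  define \<kappa> :: zsqrt10 where "\<kappa> = 9 + 3 * sqrt10"
  define \<epsilon> where "\<epsilon> j = u ^ Suc j" for j
  define \<epsilon>' :: "nat \<Rightarrow> zsqrt10" where "\<epsilon>' j = (19 - 6 * sqrt10) ^ Suc j" for j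
  define k where "k j = \<kappa> * (\<Sum>i<Suc j. u ^ i)" for j
  define m where "m j = c * \<epsilon>' j" for j
  define Q where "Q j = {m j, quad_b (m j) (k j), quad_c (m j) (k j), quad_d (m j) (k j)}" for j
  have "u * (19 - 6 * sqrt10) = 361 - 36 * sqrt10\<^sup>2"
    by (simp add: u_def algebra_simps power2_eq_square)
  then have unit: "\<epsilon> j * \<epsilon>' j = 1" for j
    unfolding \<epsilon>_def \<epsilon>'_def power_mult_distrib[symmetric] by simp
  have odd: "\<epsilon> j = 2 * k j + 1" for j
    using power_diff_1_eq[of u "Suc j"] by (simp add: \<epsilon>_def k_def u_def \<kappa>_def algebra_simps)
  have "k j \<noteq> 0" for j
    using odd[of j] pell_unit_power_eq_iff[of "Suc j" 0] by (auto simp: \<epsilon>_def u_def)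
  moreover have "mod3 (k j) = 0" for j
  proof -
    have "mod3 \<kappa> = 0"
      by (simp add: \<kappa>_def)
    then show ?thesis
      by (simp only: k_def mod3.zsqrt10_eval_mult mult_zero_left)
  qed
  moreover have "zsqrt10_norm (\<epsilon> j) = 1" for j
    using zsqrt10_norm_canonical[of 19 6] unfolding \<epsilon>_def u_def zsqrt10_norm_power by simp
  ultimately have "Dn_quadruple (4 + 4 * c) (Q j)" for j
    unfolding Q_def m_def using Dn_quadruple_unit_twist[OF unit odd] assms by blast
  moreover have "infinite (range Q)"
  proof (rule infinite_range_if_inj_members)
    have "mod3 (9 * c + 8) \<noteq> 0"
      using assms(1) by simp
    then have "9 * c + 8 \<noteq> 0"
      by (metis zsqrt10_eval_zero)
    then show "inj (\<lambda>j. \<epsilon> j * (9 * c + 8))"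
      by (intro injI) (simp add: \<epsilon>_def u_def pell_unit_power_eq_iff del: power_Suc)
    have "quad_d (m j) (k j) = \<epsilon> j * (9 * c + 8)" for j
      using unit[of j] unfolding quad_d_def m_def odd[symmetric]
      by (simp add: power2_eq_square algebra_simps)
    then show "\<epsilon> j * (9 * c + 8) \<in> Q j" for j
      by (simp add: Q_def)
  qed (simp_all add: Q_def)
  ultimately show ?thesis
    by (metis (mono_tags, lifting) finite_subset mem_Collect_eq rangeE subsetI)
qed

lemma zsd_is_square_coords: "zsd_is_square 10 (coords x) \<longleftrightarrow> (\<exists>r. x = r\<^sup>2)"
  unfolding zsd_is_square_def power2_eq_square
  by (metis Abs_zsqrt10_inverse UNIV_I coords_inject times_zsqrt10.rep_eq)

lemma is_Dn_quadruple_coords: "is_Dn_quadruple 10 (coords n) (coords ` Q) \<longleftrightarrow> Dn_quadruple n Q"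
proof -
  have "card (coords ` Q) = card Q"
    by (simp add: card_image coords_inject inj_on_def)
  moreover have "(0, 0) \<in> coords ` Q \<longleftrightarrow> 0 \<in> Q"
    by (metis coords_inject image_iff zero_zsqrt10.rep_eq)
  moreover have "zsd_add (zsd_mult 10 (coords a) (coords b)) (coords n) = coords (a * b + n)" for a b
    by (simp add: plus_zsqrt10.rep_eq times_zsqrt10.rep_eq)
  ultimately show ?thesis
    unfolding is_Dn_quadruple_def Dn_quadruple_def
    by (simp add: zsd_is_square_coords coords_inject eq_commute[of _ "_\<^sup>2"])
qed

lemma infinite_is_Dn_quadruple_coords:
  assumes "infinite {Q. Dn_quadruple n Q}"
  shows "infinite {Q. is_Dn_quadruple 10 (coords n) Q}"
proof
  assume "finite {Q. is_Dn_quadruple 10 (coords n) Q}"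
  moreover have "image coords ` {Q. Dn_quadruple n Q} \<subseteq> {Q. is_Dn_quadruple 10 (coords n) Q}"
    by (auto simp: is_Dn_quadruple_coords)
  ultimately have "finite (image coords ` {Q. Dn_quadruple n Q})"
    by (rule finite_subset[rotated])
  moreover have "inj (image coords)"
    by (simp add: inj_image_eq_iff inj_on_def coords_inject)
  ultimately show False
    using assms finite_imageD inj_on_subset by blast
qed

lemma of_int_mod3: "(of_int (z mod 3) :: 3) = of_int z"
  by (simp add: bit1.of_int_eq)

lemma infinite_Dn_quadruples_4a_4b:
  fixes a b :: int
  assumes "a mod 3 = 2" and "b mod 3 = 0" and "a mod 5 \<in> {1, 4}"
  shows "infinite {Q. is_Dn_quadruple 10 (4 * a, 4 * b) Q}"
proof -
  define c where "c = of_int (a - 1) + of_int b * sqrt10"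
  have "mod3 c = 1"
    using of_int_mod3[of a] of_int_mod3[of b] assms(1,2) by (simp add: c_def)
  moreover have "zsqrt10_norm (9 * c + 8) \<noteq> zsqrt10_norm c"
  proof
    assume "zsqrt10_norm (9 * c + 8) = zsqrt10_norm c"
    moreover have "9 * c + 8 = of_int (9 * a - 1) + of_int (9 * b) * sqrt10"
      by (simp add: c_def algebra_simps)
    ultimately have "(9 * a - 1)\<^sup>2 - 10 * (9 * b)\<^sup>2 = (a - 1)\<^sup>2 - 10 * b\<^sup>2"
      unfolding c_def by (simp only: zsqrt10_norm_canonical)
    then have "a = 5 * (a\<^sup>2 - 10 * b\<^sup>2)"
      by (simp add: power2_eq_square algebra_simps)
    then have "a mod 5 = 0"
      by (metis mod_mult_self1_is_0)
    then show False
      using assms(3) by simp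
  qed
  ultimately have "infinite {Q. Dn_quadruple (4 + 4 * c) Q}"
    by (rule infinite_Dn_quadruples_zsqrt10)
  moreover have "coords (4 + 4 * c) = (4 * a, 4 * b)"
  proof -
    have "4 + 4 * c = of_int (4 * a) + of_int (4 * b) * sqrt10"
      by (simp add: c_def algebra_simps)
    then show ?thesis
      by (simp only: coords_canonical)
  qed
  ultimately show ?thesis
    using infinite_is_Dn_quadruple_coords by metis
qed

theorem mainTheorem6:
  fixes m k :: int
  shows "(m mod 5 \<in> {2, 3} \<longrightarrow>
            infinite {Q. is_Dn_quadruple 10 (4 * (12 * m + 5), 4 * (6 * k + 3)) Q})
       \<and> (m mod 5 \<in> {0, 4} \<longrightarrow>
            infinite {Q. is_Dn_quadruple 10 (4 * (12 * m + 11), 4 * (6 * k + 3)) Q})"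
proof (intro conjI impI)
  have residues_mod3: "(12 * m + 5) mod 3 = 2" "(12 * m + 11) mod 3 = 2" "(6 * k + 3) mod 3 = 0"
    by presburger+
  note mod5 = mod_add_left_eq[of "12 * m", symmetric] mod_mult_right_eq[of 12 m, symmetric]
  show "infinite {Q. is_Dn_quadruple 10 (4 * (12 * m + 5), 4 * (6 * k + 3)) Q}"
    if "m mod 5 \<in> {2, 3}"
    using that by (intro infinite_Dn_quadruples_4a_4b residues_mod3) (auto simp: mod5)
  show "infinite {Q. is_Dn_quadruple 10 (4 * (12 * m + 11), 4 * (6 * k + 3)) Q}"
    if "m mod 5 \<in> {0, 4}"
    using that by (intro infinite_Dn_quadruples_4a_4b residues_mod3) (auto simp: mod5)
qed

end
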